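(* For some constants $C\in[1,\infty)$, $\alpha\in(0,\infty)$, $\varrho_\alpha\in(0,\alpha\wedge1)$, $c\in(0,1)$ and $t_0\in\mathbb{N}$, let $h_t=t^{-\alpha}$ for all $t\ge1$ and let $(t_p)_{p\ge0}$ satisfy $t_p=t_{p-1}+\lceil C_{p-1}\log(t_{p-1})\vee C\rceil$ for $p\ge1$, for some $C_{p-1}\in[c\,t_{p-1}^{\varrho_\alpha},t_{p-1}^{\varrho_\alpha}/c]$. Then $(h_t)$ and $(t_p)$ satisfy: (1) $\log(h_{t_{p-1}})/(t_p-t_{p-1})\to0$ and $(t_p-t_{p-1})\sum_{s=t_{p-1}+1}^{t_p-1}h_s^2\to0$; (2) $h_{t_p}<h_{t_{p-1}}$ for all $p$ and $\liminf_{p\to\infty}(h_{t_p}t_p^{\alpha'}+t_p^{-\alpha'}/h_{t_p})>0$ for some $\alpha'\in(0,\infty)$; (3) $\limsup_{p\to\infty}(t_{p+1}-t_p)/(t_p-t_{p-1})<\infty$. Moreover, they also satisfy (4) $|\zeta(h_{t_p}^{-\beta_\star})|^{-2k_\star}\sum_{i=1}^p(t_i-t_{i-1})^{-k_\star\mathds{1}_{\mathbb{N}}(k_\star)}\to0$ for some $\beta_\star\in(0,\infty)$, provided (A6) holds for some $k_\star>(1+\varrho_\alpha)/\varrho_\alpha$, with $\zeta$ the function of (A6).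
   Context: $(Y_t)_{t\ge1}$ are i.i.d. on $(\Omega,\mathcal{F},\mathbb{P})$ with values in $(\mathsf{Y},\mathcal{Y})$; $\{f_\theta,\theta\in\Theta\subseteq\mathbb{R}^d\}$ are densities w.r.t. a $\sigma$-finite measure, $\theta_\star=\arg\max_{\theta\in\Theta}\mathbb{E}\{\log f_\theta(Y_1)\}$; $\mathbb{E}(g)=\mathbb{E}\{g(Y_1)\}$; $\tilde f_\theta=f_\theta$ on $\Theta$ and $0$ otherwise; $V_\epsilon=\Theta\setminus B_\epsilon(\theta_\star)$ with $B_\epsilon$ the open Euclidean ball. (A6) (for a given $k_\star\in\{1/2\}\cup\mathbb{N}$) One of the following holds: (i) there is $C_1\in(0,\infty)$ with $\sup_{C\ge C_1}\mathbb{E}[|\sup_{\theta\in V_C}\log(\tilde f_\theta/f_{\theta_\star})-\mathbb{E}\{\sup_{\theta\in V_C}\log(\tilde f_\theta/f_{\theta_\star})\}|^{2k_\star}]<\infty$ and $\limsup_{C\to\infty}\zeta(C)(\log C)^{-1}<0$ with $\zeta(C)=\mathbb{E}\{\sup_{\theta\in V_C}\log(\tilde f_\theta/f_{\theta_\star})\}$; (ii) $\limsup_{C\to\infty}\zeta(C)(\log C)^{-1}<0$ with $\zeta(C)=\log\{\sup_{\theta\in V_C}\mathbb{E}(\tilde f_\theta/f_{\theta_\star})\}$; (iii) $\mathbb{E}(|\log f_{\theta_\star}|^{2k_\star})<\infty$ and $\limsup_{C\to\infty}\zeta(C)(\log C)^{-1}<0$ with $\zeta(C)=\log\{\sup_{\theta\in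 V_C}\mathbb{E}(\tilde f_\theta)\}$. *)

theory Defs
  imports "HOL-Probability.Probability"
begin

definition hstep :: "real \<Rightarrow> nat \<Rightarrow> real" where
  "hstep \<alpha> s = real s powr (- \<alpha>)"

definition elog :: "real \<Rightarrow> ereal" where
  "elog x = (if x > 0 then ereal (ln x) else - \<infinity>)"

definition eln :: "ennreal \<Rightarrow> ereal" where
  "eln x = (if x = \<infinity> then \<infinity> else elog (enn2real x))"

definition epow :: "ereal \<Rightarrow> real \<Rightarrow> ereal" where
  "epow x k = (if x = \<infinity> then \<infinity> else ereal (real_of_ereal x powr k))"

definition eexpect :: "'a measure \<Rightarrow> ('a \<Rightarrow> ereal) \<Rightarrow> ereal" where
  "eexpect M X = enn2ereal (\<integral>\<^sup>+ x. e2ennreal (max 0 (X x)) \<partial>M)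
                 - enn2ereal (\<integral>\<^sup>+ x. e2ennreal (max 0 (- X x)) \<partial>M)"

definition ftil :: "('p set) \<Rightarrow> ('p \<Rightarrow> 'y \<Rightarrow> real) \<Rightarrow> 'p \<Rightarrow> 'y \<Rightarrow> real" where
  "ftil \<Theta> f \<theta> y = (if \<theta> \<in> \<Theta> then f \<theta> y else 0)"

definition Vset :: "('p::metric_space) set \<Rightarrow> 'p \<Rightarrow> real \<Rightarrow> 'p set" where
  "Vset \<Theta> \<theta>s \<epsilon> = \<Theta> - ball \<theta>s \<epsilon>"

definition stat_model ::
  "'a measure \<Rightarrow> 'y measure \<Rightarrow> (nat \<Rightarrow> 'a \<Rightarrow> 'y) \<Rightarrow> 'y measure \<Rightarrow> (real^'d) set
    \<Rightarrow> (real^'d \<Rightarrow> 'y \<Rightarrow> real) \<Rightarrow> real^'d \<Rightarrow> bool" where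
  "stat_model M N Y \<mu> \<Theta> f \<theta>s \<longleftrightarrow>
     prob_space M \<and> (\<forall>t. Y t \<in> measurable M N)
     \<and> prob_space.indep_vars M (\<lambda>_. N) Y {1..}
     \<and> (\<forall>t\<ge>1. distr M N (Y t) = distr M N (Y 1))
     \<and> sigma_finite_measure \<mu> \<and> sets \<mu> = sets N
     \<and> (\<forall>\<theta>\<in>\<Theta>. f \<theta> \<in> borel_measurable N \<and> (\<forall>y\<in>space N. 0 \<le> f \<theta> y)
            \<and> (\<integral>\<^sup>+ y. ennreal (f \<theta> y) \<partial>\<mu>) = 1)
     \<and> \<theta>s \<in> \<Theta>
     \<and> (\<forall>\<theta>\<in>\<Theta> - {\<theta>s}. eexpect M (\<lambda>\<omega>. elog (f \<theta> (Y 1 \<omega>)))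
                           < eexpect M (\<lambda>\<omega>. elog (f \<theta>s (Y 1 \<omega>))))"

definition supLR ::
  "(real^'d) set \<Rightarrow> (real^'d \<Rightarrow> 'y \<Rightarrow> real) \<Rightarrow> real^'d \<Rightarrow> real \<Rightarrow> 'y \<Rightarrow> ereal" where
  "supLR \<Theta> f \<theta>s C y = (SUP \<theta>\<in>Vset \<Theta> \<theta>s C. elog (ftil \<Theta> f \<theta> y / f \<theta>s y))"

definition zeta_i :: "'a measure \<Rightarrow> (nat \<Rightarrow> 'a \<Rightarrow> 'y) \<Rightarrow> (real^'d) set
    \<Rightarrow> (real^'d \<Rightarrow> 'y \<Rightarrow> real) \<Rightarrow> real^'d \<Rightarrow> real \<Rightarrow> ereal" where
  "zeta_i M Y \<Theta> f \<theta>s C = eexpect M (\<lambda>\<omega>. supLR \<Theta> f \<theta>s C (Y 1 \<omega>))"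

definition zeta_ii :: "'a measure \<Rightarrow> (nat \<Rightarrow> 'a \<Rightarrow> 'y) \<Rightarrow> (real^'d) set
    \<Rightarrow> (real^'d \<Rightarrow> 'y \<Rightarrow> real) \<Rightarrow> real^'d \<Rightarrow> real \<Rightarrow> ereal" where
  "zeta_ii M Y \<Theta> f \<theta>s C =
     eln (SUP \<theta>\<in>Vset \<Theta> \<theta>s C. \<integral>\<^sup>+ \<omega>. ennreal (ftil \<Theta> f \<theta> (Y 1 \<omega>) / f \<theta>s (Y 1 \<omega>)) \<partial>M)"

definition zeta_iii :: "'a measure \<Rightarrow> (nat \<Rightarrow> 'a \<Rightarrow> 'y) \<Rightarrow> (real^'d) set
    \<Rightarrow> (real^'d \<Rightarrow> 'y \<Rightarrow> real) \<Rightarrow> real^'d \<Rightarrow> real \<Rightarrow> ereal" where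
  "zeta_iii M Y \<Theta> f \<theta>s C =
     eln (SUP \<theta>\<in>Vset \<Theta> \<theta>s C. \<integral>\<^sup>+ \<omega>. ennreal (ftil \<Theta> f \<theta> (Y 1 \<omega>)) \<partial>M)"

definition neg_log_growth :: "(real \<Rightarrow> ereal) \<Rightarrow> bool" where
  "neg_log_growth \<zeta> \<longleftrightarrow> Limsup at_top (\<lambda>C. \<zeta> C / ereal (ln C)) < 0"

definition A6 :: "'a measure \<Rightarrow> (nat \<Rightarrow> 'a \<Rightarrow> 'y) \<Rightarrow> (real^'d) set
    \<Rightarrow> (real^'d \<Rightarrow> 'y \<Rightarrow> real) \<Rightarrow> real^'d \<Rightarrow> real \<Rightarrow> (real \<Rightarrow> ereal) \<Rightarrow> bool" where
  "A6 M Y \<Theta> f \<theta>s k \<zeta> \<longleftrightarrow>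
     (k = 1/2 \<or> (\<exists>n::nat. n \<ge> 1 \<and> k = real n)) \<and>
     ( (\<zeta> = zeta_i M Y \<Theta> f \<theta>s
         \<and> (\<exists>C1>0. (SUP C\<in>{C1..}. \<integral>\<^sup>+ \<omega>. e2ennreal
               (epow \<bar>supLR \<Theta> f \<theta>s C (Y 1 \<omega>) - zeta_i M Y \<Theta> f \<theta>s C\<bar> (2 * k)) \<partial>M) < \<infinity>)
         \<and> neg_log_growth \<zeta>)
     \<or> (\<zeta> = zeta_ii M Y \<Theta> f \<theta>s \<and> neg_log_growth \<zeta>)
     \<or> (\<zeta> = zeta_iii M Y \<Theta> f \<theta>s
         \<and> (\<integral>\<^sup>+ \<omega>. e2ennreal (epow \<bar>elog (f \<theta>s (Y 1 \<omega>))\<bar> (2 * k)) \<partial>M) < \<infinity>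
         \<and> neg_log_growth \<zeta>))"

definition inv_pow :: "ereal \<Rightarrow> real \<Rightarrow> ereal" where
  "inv_pow z k = (if z = 0 then \<infinity> else if \<bar>z\<bar> = \<infinity> then 0
                  else ereal (\<bar>real_of_ereal z\<bar> powr (- 2 * k)))"

end

theory Submission
  imports Defs "HOL-Real_Asymp.Real_Asymp"
begin

(* As t_p >= p + 1, everything becomes asymptotics in
   x = t_p: log h_(t_p) / D_p = O(x^-rho), and D_p * sum h_s^2 <= D_p^2 x^(-2 alpha) -> 0 because
   rho < alpha. Since rho < 1 the gaps are eventually below t_p, so t_(p+1) <= 2 t_p and
   D_(p+1) / D_p <= 2^rho / c^2 + o(1). For (4) take beta = 1 / alpha, so that h_(t_p)^(-beta) = t_p:
   the growth condition of (A6) gives zeta(C) <= - delta log C, hence |zeta(t_p)|^(-2k) -> 0, while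
   sum_p D_p^(-k) <= c^(-k) sum_p p^(-k rho) < infinity as k rho > 1 + rho. *)

lemma hstep_less_hstep:
  assumes "0 < \<alpha>" and "0 < m" and "m < n"
  shows "hstep \<alpha> n < hstep \<alpha> m"
  using assms unfolding hstep_def by (intro powr_less_mono2_neg) auto

lemma hstep_mult_powr:
  assumes "0 < s"
  shows "hstep \<alpha> s * real s powr \<alpha> = 1"
  using assms by (simp add: hstep_def powr_add[symmetric])

lemma hstep_powr_inverse:
  assumes "0 < s" and "\<alpha> \<noteq> 0"
  shows "hstep \<alpha> s powr (- (1 / \<alpha>)) = real s"
  using assms by (simp add: hstep_def powr_powr)

lemma ln_hstep:
  assumes "0 < s"
  shows "ln (hstep \<alpha> s) = - \<alpha> * ln (real s)"
  using assms by (simp add: hstep_def ln_powr)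

lemma hstep_squared: "(hstep \<alpha> s)\<^sup>2 = real s powr (- 2 * \<alpha>)"
  unfolding hstep_def power2_eq_square powr_add[symmetric] by simp

lemma Liminf_hstep_powr_ge_1:
  assumes "\<And>p. 0 < s p"
  shows "1 \<le> Liminf F (\<lambda>p. ereal (hstep \<alpha> (s p) * real (s p) powr \<alpha>
                                   + real (s p) powr (- \<alpha>) / hstep \<alpha> (s p)))"
proof (intro Liminf_bounded always_eventually allI)
  fix p
  have "0 \<le> real (s p) powr (- \<alpha>) / hstep \<alpha> (s p)"
    by (simp add: hstep_def)
  then show "1 \<le> ereal (hstep \<alpha> (s p) * real (s p) powr \<alpha> + real (s p) powr (- \<alpha>) / hstep \<alpha> (s p))"
    using hstep_mult_powr[OF assms] by simp
qed

lemma inv_pow_nonneg: "0 \<le> inv_pow z k"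
  by (simp add: inv_pow_def)

lemma inv_pow_tendsto_zero:
  assumes "neg_log_growth \<zeta>" and "0 < k"
  shows "((\<lambda>C. inv_pow (\<zeta> C) k) \<longlongrightarrow> 0) at_top"
proof -
  obtain z where z: "Limsup at_top (\<lambda>C. \<zeta> C / ereal (ln C)) < ereal z" "ereal z < 0"
    using assms(1) ereal_dense2 unfolding neg_log_growth_def by blast
  define \<delta> where "\<delta> = - z"
  have "0 < \<delta>"
    using z(2) by (simp add: \<delta>_def)
  have below: "\<forall>\<^sub>F C in at_top. \<zeta> C / ereal (ln C) < ereal (- \<delta>)"
    using Limsup_lessD[OF z(1)] by (simp add: \<delta>_def)
  have upper: "\<forall>\<^sub>F C in at_top. inv_pow (\<zeta> C) k \<le> ereal ((\<delta> * ln C) powr (- 2 * k))"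
    using below eventually_ge_at_top[of "exp 1"]
  proof eventually_elim
    case (elim C)
    then have lnC: "1 \<le> ln C"
      using ln_ge_iff[of C 1] exp_gt_zero[of 1] by linarith
    show ?case
    proof (cases "\<zeta> C")
      case (real r)
      then have r: "r < - \<delta> * ln C"
        using elim(1) lnC by (simp add: divide_less_eq)
      have pos: "0 < \<delta> * ln C"
        using \<open>0 < \<delta>\<close> lnC by simp
      have "\<bar>r\<bar> powr (- 2 * k) \<le> (\<delta> * ln C) powr (- 2 * k)"
        using r pos \<open>0 < k\<close> by (intro powr_mono2') auto
      then show ?thesis
        using real r pos by (simp add: inv_pow_def)
    next
      case PInf
      then show ?thesis using elim(1) lnC by simp
    qed (simp add: inv_pow_def)
  qed
  have "((\<lambda>C. (\<delta> * ln C) powr (- 2 * k)) \<longlongrightarrow> 0) at_top"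
    using \<open>0 < \<delta>\<close> \<open>0 < k\<close> by real_asymp
  then have lim: "((\<lambda>C. ereal ((\<delta> * ln C) powr (- 2 * k))) \<longlongrightarrow> 0) at_top"
    unfolding zero_ereal_def by (rule tendsto_ereal)
  have lower: "\<forall>\<^sub>F C in at_top. 0 \<le> inv_pow (\<zeta> C) k"
    by (simp add: inv_pow_nonneg)
  show ?thesis
    by (rule tendsto_sandwich[OF lower upper tendsto_const lim])
qed

lemma A6_neg_log_growth: "A6 M Y \<Theta> f \<theta>s k \<zeta> \<Longrightarrow> neg_log_growth \<zeta>"
  unfolding A6_def by blast

lemma A6_exponent_in_Nats: "A6 M Y \<Theta> f \<theta>s k \<zeta> \<Longrightarrow> k \<noteq> 1 / 2 \<Longrightarrow> k \<in> \<nat>"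
  unfolding A6_def by (auto simp: of_nat_in_Nats)

lemma powr_mult_ln_mono:
  fixes x y :: real
  assumes "0 \<le> \<rho>" and "1 \<le> x" and "x \<le> y"
  shows "x powr \<rho> * ln x \<le> y powr \<rho> * ln y"
proof (rule mult_mono)
  show "x powr \<rho> \<le> y powr \<rho>"
    using assms by (intro powr_mono2) auto
qed (use assms in auto)

locale log_gap_grid =
  fixes t :: "nat \<Rightarrow> nat" and \<rho> c K :: real
  assumes rho_pos: "0 < \<rho>" and c_pos: "0 < c" and t_0: "1 \<le> t 0"
    and t_less_Suc: "t p < t (Suc p)"
    and gap_lower: "c * real (t p) powr \<rho> * ln (real (t p)) \<le> real (t (Suc p) - t p)"
    and gap_upper: "real (t (Suc p) - t p) \<le> real (t p) powr \<rho> * ln (real (t p)) / c + K"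
begin

abbreviation gap :: "nat \<Rightarrow> real" where
  "gap p \<equiv> real (t (Suc p) - t p)"

lemma Suc_le_t: "Suc p \<le> t p"
proof (induction p)
  case (Suc p)
  then show ?case
    using t_less_Suc[of p] by simp
qed (use t_0 in simp)

lemma t_pos: "0 < t p"
  using Suc_le_t[of p] by simp

lemma ln_t_nonneg: "0 \<le> ln (real (t p))"
  using t_pos[of p] by simp

lemma gap_ge_1: "1 \<le> gap p"
  using t_less_Suc[of p] by simp

lemma t_Suc: "real (t (Suc p)) = real (t p) + gap p"
  using t_less_Suc[of p] by simp

lemma filterlim_t: "filterlim (\<lambda>p. real (t p)) at_top sequentially"
proof (rule filterlim_at_top_mono[OF filterlim_real_sequentially])
  show "\<forall>\<^sub>F p in sequentially. real p \<le> real (t p)"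
    using Suc_le_t by (intro always_eventually) (simp add: Suc_leD)
qed

lemma eventually_t_ge: "\<forall>\<^sub>F p in sequentially. x \<le> real (t p)"
  using filterlim_t by (simp add: filterlim_at_top)

lemma ln_hstep_div_gap_tendsto_zero: "(\<lambda>p. ln (hstep \<alpha> (t p)) / gap p) \<longlonglongrightarrow> 0"
proof (rule Lim_null_comparison)
  have "((\<lambda>x. \<bar>\<alpha>\<bar> / c * x powr (- \<rho>)) \<longlongrightarrow> 0) at_top"
    using rho_pos by real_asymp
  then show "(\<lambda>p. \<bar>\<alpha>\<bar> / c * real (t p) powr (- \<rho>)) \<longlonglongrightarrow> 0"
    by (rule filterlim_compose[OF _ filterlim_t])
  show "\<forall>\<^sub>F p in sequentially. norm (ln (hstep \<alpha> (t p)) / gap p) \<le> \<bar>\<alpha>\<bar> / c * real (t p) powr (- \<rho>)"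
  proof (intro always_eventually allI)
    fix p
    let ?T = "real (t p)"
    have "c * ?T powr \<rho> * ln ?T / gap p \<le> 1"
      using gap_lower[of p] gap_ge_1[of p] by simp
    then have "ln ?T / gap p \<le> ?T powr (- \<rho>) / c"
      using c_pos t_pos[of p] by (simp add: powr_minus field_simps)
    then have "\<bar>\<alpha>\<bar> * (ln ?T / gap p) \<le> \<bar>\<alpha>\<bar> * (?T powr (- \<rho>) / c)"
      by (rule mult_left_mono) simp
    then show "norm (ln (hstep \<alpha> (t p)) / gap p) \<le> \<bar>\<alpha>\<bar> / c * ?T powr (- \<rho>)"
      using t_pos[of p] ln_t_nonneg[of p] gap_ge_1[of p] by (simp add: ln_hstep abs_mult)
  qed
qed

lemma gap_times_sum_hstep_squared_tendsto_zero:
  assumes "\<rho> < \<alpha>"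
  shows "(\<lambda>p. gap p * (\<Sum>s\<in>{t p<..<t (Suc p)}. (hstep \<alpha> s)\<^sup>2)) \<longlonglongrightarrow> 0"
proof (rule Lim_null_comparison)
  define U where "U x = x powr \<rho> * ln x / c + K" for x
  have "((\<lambda>x. (U x)\<^sup>2 * x powr (- 2 * \<alpha>)) \<longlongrightarrow> 0) at_top"
    unfolding U_def using assms rho_pos c_pos by real_asymp
  then show "(\<lambda>p. (U (real (t p)))\<^sup>2 * real (t p) powr (- 2 * \<alpha>)) \<longlonglongrightarrow> 0"
    by (rule filterlim_compose[OF _ filterlim_t])
  show "\<forall>\<^sub>F p in sequentially. norm (gap p * (\<Sum>s\<in>{t p<..<t (Suc p)}. (hstep \<alpha> s)\<^sup>2))
          \<le> (U (real (t p)))\<^sup>2 * real (t p) powr (- 2 * \<alpha>)"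
  proof (intro always_eventually allI)
    fix p
    let ?T = "real (t p)" and ?S = "\<Sum>s\<in>{t p<..<t (Suc p)}. (hstep \<alpha> s)\<^sup>2"
    have "(hstep \<alpha> s)\<^sup>2 \<le> ?T powr (- 2 * \<alpha>)" if "s \<in> {t p<..<t (Suc p)}" for s
      unfolding hstep_squared using that t_pos[of p] assms rho_pos by (intro powr_mono2') auto
    then have "?S \<le> real (card {t p<..<t (Suc p)}) * ?T powr (- 2 * \<alpha>)"
      by (rule sum_bounded_above)
    also have "\<dots> \<le> gap p * ?T powr (- 2 * \<alpha>)"
      by (intro mult_right_mono) auto
    finally have "gap p * ?S \<le> gap p * (gap p * ?T powr (- 2 * \<alpha>))"
      using gap_ge_1[of p] by (intro mult_left_mono) auto
    also have "\<dots> = (gap p)\<^sup>2 * ?T powr (- 2 * \<alpha>)"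
      by (simp add: power2_eq_square)
    also have "\<dots> \<le> (U ?T)\<^sup>2 * ?T powr (- 2 * \<alpha>)"
      using gap_upper[of p] gap_ge_1[of p] unfolding U_def
      by (intro mult_right_mono power_mono) auto
    finally show "norm (gap p * ?S) \<le> (U ?T)\<^sup>2 * ?T powr (- 2 * \<alpha>)"
      using gap_ge_1[of p] by (simp add: sum_nonneg)
  qed
qed

lemma eventually_gap_le_t:
  assumes "\<rho> < 1"
  shows "\<forall>\<^sub>F p in sequentially. gap p \<le> real (t p)"
proof -
  have "((\<lambda>x. (x powr \<rho> * ln x / c + K) / x) \<longlongrightarrow> 0) at_top"
    using assms rho_pos c_pos by real_asymp
  from order_tendstoD(2)[OF filterlim_compose[OF this filterlim_t], of 1]
  have "\<forall>\<^sub>F p in sequentially. (real (t p) powr \<rho> * ln (real (t p)) / c + K) / real (t p) < 1"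
    by simp
  then show ?thesis
  proof (rule eventually_mono)
    fix p
    assume "(real (t p) powr \<rho> * ln (real (t p)) / c + K) / real (t p) < 1"
    then show "gap p \<le> real (t p)"
      using gap_upper[of p] t_pos[of p] by (simp add: divide_less_eq)
  qed
qed

lemma Limsup_gap_ratio_finite:
  assumes "\<rho> < 1"
  shows "Limsup sequentially (\<lambda>p. ereal (gap (Suc p) / gap p)) < \<infinity>"
proof -
  define G where "G x = ((2 * x) powr \<rho> * ln (2 * x) / c + K) / (c * x powr \<rho> * ln x)" for x
  have "(G \<longlongrightarrow> 2 powr \<rho> / c\<^sup>2) at_top"
    unfolding G_def using rho_pos c_pos by real_asymp (simp add: divide_inverse power2_eq_square)
  from order_tendstoD(2)[OF filterlim_compose[OF this filterlim_t], of "2 powr \<rho> / c\<^sup>2 + 1"]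
  have "\<forall>\<^sub>F p in sequentially. G (real (t p)) < 2 powr \<rho> / c\<^sup>2 + 1"
    by simp
  moreover have "\<forall>\<^sub>F p in sequentially. gap (Suc p) / gap p \<le> G (real (t p))"
    using eventually_gap_le_t[OF assms] eventually_t_ge[of 2]
  proof eventually_elim
    case (elim p)
    let ?T = "real (t p)"
    let ?T' = "real (t (Suc p))"
    have "1 \<le> ?T'"
      using t_pos[of "Suc p"] by simp
    moreover have "?T' \<le> 2 * ?T"
      using elim(1) t_Suc[of p] by linarith
    ultimately have "?T' powr \<rho> * ln ?T' / c \<le> (2 * ?T) powr \<rho> * ln (2 * ?T) / c"
      using rho_pos c_pos powr_mult_ln_mono[of \<rho> ?T' "2 * ?T"] by (simp add: divide_right_mono)
    then have upper: "gap (Suc p) \<le> (2 * ?T) powr \<rho> * ln (2 * ?T) / c + K"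
      using gap_upper[of "Suc p"] by linarith
    have "0 < c * ?T powr \<rho> * ln ?T"
      using elim(2) c_pos by simp
    then show "gap (Suc p) / gap p \<le> G ?T"
      unfolding G_def using upper gap_lower[of p] gap_ge_1[of "Suc p"] by (intro frac_le) simp_all
  qed
  ultimately have "\<forall>\<^sub>F p in sequentially. ereal (gap (Suc p) / gap p) \<le> ereal (2 powr \<rho> / c\<^sup>2 + 1)"
    by eventually_elim simp
  then have "Limsup sequentially (\<lambda>p. ereal (gap (Suc p) / gap p)) \<le> ereal (2 powr \<rho> / c\<^sup>2 + 1)"
    by (rule Limsup_bounded)
  then show ?thesis
    by (rule order.strict_trans1) simp
qed

lemma summable_gap_powr:
  assumes "1 < k * \<rho>"
  shows "summable (\<lambda>p. gap p powr (- k))"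
proof (rule summable_comparison_test_ev)
  have "0 < k"
    using assms rho_pos by (intro zero_less_mult_pos2[of k \<rho>]) auto
  have "summable (\<lambda>p. real p powr (- k * \<rho>))"
    using assms by (simp add: summable_real_powr_iff)
  then have "summable (\<lambda>p. real (Suc p) powr (- k * \<rho>))"
    by (subst summable_Suc_iff)
  then show "summable (\<lambda>p. c powr (- k) * real (Suc p) powr (- k * \<rho>))"
    by (rule summable_mult)
  show "\<forall>\<^sub>F p in sequentially. norm (gap p powr (- k)) \<le> c powr (- k) * real (Suc p) powr (- k * \<rho>)"
    using eventually_t_ge[of "exp 1"]
  proof eventually_elim
    case (elim p)
    let ?T = "real (t p)"
    have "1 \<le> ln ?T"
      using elim ln_ge_iff[of ?T 1] exp_gt_zero[of 1] by linarith
    then have "c * ?T powr \<rho> \<le> c * ?T powr \<rho> * ln ?T"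
      using c_pos mult_left_mono[of 1 "ln ?T" "c * ?T powr \<rho>"] by simp
    moreover have "c * real (Suc p) powr \<rho> \<le> c * ?T powr \<rho>"
      using Suc_le_t[of p] c_pos rho_pos by (intro mult_left_mono powr_mono2) auto
    ultimately have "c * real (Suc p) powr \<rho> \<le> gap p"
      using gap_lower[of p] by linarith
    then have "gap p powr (- k) \<le> (c * real (Suc p) powr \<rho>) powr (- k)"
      using c_pos \<open>0 < k\<close> by (intro powr_mono2') auto
    also have "\<dots> = c powr (- k) * real (Suc p) powr (- k * \<rho>)"
      using c_pos by (simp add: powr_mult powr_powr mult.commute)
    finally show ?case
      by simp
  qed
qed

lemma inv_pow_times_gap_sum_tendsto_zero:
  assumes "neg_log_growth \<zeta>" and "1 < k * \<rho>"
  shows "(\<lambda>p. inv_pow (\<zeta> (real (t p))) k * ereal (\<Sum>i\<in>{1..p}. real (t i - t (i - 1)) powr (- k)))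
           \<longlonglongrightarrow> 0"
proof -
  have "0 < k"
    using assms(2) rho_pos by (intro zero_less_mult_pos2[of k \<rho>]) auto
  have zeta: "(\<lambda>p. inv_pow (\<zeta> (real (t p))) k) \<longlonglongrightarrow> 0"
    by (rule filterlim_compose[OF inv_pow_tendsto_zero[OF assms(1) \<open>0 < k\<close>] filterlim_t])
  have "(\<lambda>n. \<Sum>p<n. gap p powr (- k)) \<longlonglongrightarrow> (\<Sum>p. gap p powr (- k))"
    using summable_gap_powr[OF assms(2)] by (rule summable_LIMSEQ)
  then have sums: "(\<lambda>n. ereal (\<Sum>i\<in>{1..n}. real (t i - t (i - 1)) powr (- k)))
                     \<longlonglongrightarrow> ereal (\<Sum>p. gap p powr (- k))"
    by (intro tendsto_ereal) (simp add: sum.atLeast1_atMost_eq)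
  show ?thesis
    using tendsto_mult_ereal[OF zeta sums] by simp
qed

end

lemma log_gap_grid_ceiling_recursion:
  assumes "1 \<le> Cc" and "0 < \<rho>" and "0 < c" and "1 \<le> t 0"
    and Cs: "\<forall>p. c * real (t p) powr \<rho> \<le> Cs p \<and> Cs p \<le> real (t p) powr \<rho> / c"
    and step: "\<forall>p. t (Suc p) = t p + nat \<lceil>max (Cs p * ln (real (t p))) Cc\<rceil>"
  shows "log_gap_grid t \<rho> c (Cc + 1)"
proof
  fix p
  let ?T = "real (t p)" and ?m = "max (Cs p * ln (real (t p))) Cc"
  have "incseq t"
    using step by (intro incseq_SucI) simp
  then have "0 \<le> ln ?T"
    using assms(4) incseqD[of t 0 p] by simp
  have gap: "real (t (Suc p) - t p) = of_int \<lceil>?m\<rceil>"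
    using step assms(1) by simp
  show "t p < t (Suc p)"
    using step assms(1) by simp
  have "c * ?T powr \<rho> * ln ?T \<le> Cs p * ln ?T"
    using Cs \<open>0 \<le> ln ?T\<close> by (intro mult_right_mono) auto
  then show "c * ?T powr \<rho> * ln ?T \<le> real (t (Suc p) - t p)"
    unfolding gap using le_of_int_ceiling[of ?m] by linarith
  have "Cs p * ln ?T \<le> ?T powr \<rho> / c * ln ?T"
    using Cs \<open>0 \<le> ln ?T\<close> by (intro mult_right_mono) auto
  moreover have "0 \<le> ?T powr \<rho> * ln ?T / c"
    using \<open>0 \<le> ln ?T\<close> assms(3) by simp
  ultimately have "?m \<le> ?T powr \<rho> * ln ?T / c + Cc"
    using assms(1) by (auto simp: max_def)
  then show "real (t (Suc p) - t p) \<le> ?T powr \<rho> * ln ?T / c + (Cc + 1)"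
    unfolding gap using of_int_ceiling_le_add_one[of ?m] by linarith
qed (use assms in auto)

theorem proposition2:
  fixes Cc \<alpha> \<rho> c :: real and t0 :: nat and t :: "nat \<Rightarrow> nat" and Cs :: "nat \<Rightarrow> real"
    and M :: "'a measure" and N :: "'y measure" and Y :: "nat \<Rightarrow> 'a \<Rightarrow> 'y"
    and \<mu> :: "'y measure" and \<Theta> :: "(real^'d) set" and f :: "real^'d \<Rightarrow> 'y \<Rightarrow> real"
    and \<theta>s :: "real^'d"
  assumes "Cc \<ge> 1" and "\<alpha> > 0" and "0 < \<rho>" and "\<rho> < min \<alpha> 1"
    and "0 < c" and "c < 1" and "t0 \<ge> 1" and "t 0 = t0"
    and "\<forall>p. c * real (t p) powr \<rho> \<le> Cs p \<and> Cs p \<le> real (t p) powr \<rho> / c"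
    and "\<forall>p. t (Suc p) = t p + nat \<lceil>max (Cs p * ln (real (t p))) Cc\<rceil>"
  shows
    "((\<lambda>p. ln (hstep \<alpha> (t p)) / real (t (Suc p) - t p)) \<longlonglongrightarrow> 0)
   \<and> ((\<lambda>p. real (t (Suc p) - t p) * (\<Sum>s\<in>{t p<..<t (Suc p)}. (hstep \<alpha> s)\<^sup>2)) \<longlonglongrightarrow> 0)
   \<and> (\<forall>p. hstep \<alpha> (t (Suc p)) < hstep \<alpha> (t p))
   \<and> (\<exists>\<alpha>'>0. Liminf sequentially (\<lambda>p. ereal (hstep \<alpha> (t p) * real (t p) powr \<alpha>'
                                         + real (t p) powr (- \<alpha>') / hstep \<alpha> (t p))) > 0)
   \<and> Limsup sequentially (\<lambda>p. ereal (real (t (Suc (Suc p)) - t (Suc p)) / real (t (Suc p) - t p))) < \<infinity>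
   \<and> (\<forall>k \<zeta>. stat_model M N Y \<mu> \<Theta> f \<theta>s \<and> A6 M Y \<Theta> f \<theta>s k \<zeta> \<and> k > (1 + \<rho>) / \<rho>
        \<longrightarrow> (\<exists>\<beta>>0. (\<lambda>p. inv_pow (\<zeta> (hstep \<alpha> (t p) powr (- \<beta>))) k
               * ereal (\<Sum>i\<in>{1..p}. real (t i - t (i - 1)) powr (- k * (if k \<in> \<nat> then 1 else 0))))
             \<longlonglongrightarrow> 0))"
proof -
  interpret log_gap_grid t \<rho> c "Cc + 1"
    using assms(1,3,5,7-10) by (intro log_gap_grid_ceiling_recursion) auto
  have "\<rho> < \<alpha>" and "\<rho> < 1"
    using assms(4) by auto
  have "0 < Liminf sequentially (\<lambda>p. ereal (hstep \<alpha> (t p) * real (t p) powr \<alpha>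
                                         + real (t p) powr (- \<alpha>) / hstep \<alpha> (t p)))"
    using Liminf_hstep_powr_ge_1[where s = t, OF t_pos] by (rule order.strict_trans2[rotated]) simp
  moreover have "\<exists>\<beta>>0. (\<lambda>p. inv_pow (\<zeta> (hstep \<alpha> (t p) powr (- \<beta>))) k
               * ereal (\<Sum>i\<in>{1..p}. real (t i - t (i - 1)) powr (- k * (if k \<in> \<nat> then 1 else 0))))
             \<longlonglongrightarrow> 0"
    if A6: "A6 M Y \<Theta> f \<theta>s k \<zeta>" and k: "(1 + \<rho>) / \<rho> < k" for k \<zeta>
  proof (intro exI conjI)
    have "1 < k * \<rho>"
      using k rho_pos by (simp add: field_simps)
    moreover have "1 < k"
      using k rho_pos less_divide_eq_1_pos[of \<rho> "1 + \<rho>"] by linarith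
    moreover have "k \<in> \<nat>"
      using A6_exponent_in_Nats[OF A6] \<open>1 < k\<close> by auto
    ultimately show "(\<lambda>p. inv_pow (\<zeta> (hstep \<alpha> (t p) powr (- (1 / \<alpha>)))) k
               * ereal (\<Sum>i\<in>{1..p}. real (t i - t (i - 1)) powr (- k * (if k \<in> \<nat> then 1 else 0))))
             \<longlonglongrightarrow> 0"
      using inv_pow_times_gap_sum_tendsto_zero[OF A6_neg_log_growth[OF A6]] assms(2)
      by (simp add: hstep_powr_inverse t_pos)
  qed (use assms(2) in simp)
  ultimately show ?thesis
    using ln_hstep_div_gap_tendsto_zero gap_times_sum_hstep_squared_tendsto_zero[OF \<open>\<rho> < \<alpha>\<close>]
      Limsup_gap_ratio_finite[OF \<open>\<rho> < 1\<close>] hstep_less_hstep[OF assms(2) t_pos t_less_Suc] assms(2)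
    by blast
qed

end
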